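(* Let $\mathcal K$ be an abstract Krivine structure, and let $\mathsf E=\mathsf S(\mathsf K(\mathsf S\mathsf K\mathsf K))$. For all $P\subseteq\Pi$ and $L\subseteq\Lambda$: (1) $\mathsf E\mathsf E\perp\rho$ for every $\rho\in {}^\perp P\leadsto_\bullet\big(L\leadsto_\bullet(P\,\clubsuit\,L)\big)$; (2) $P\,\clubsuit\,L\subseteq(\{\mathsf E\mathsf E\}^\perp\ast_\bullet{}^\perp P)\ast_\bullet L\subseteq\big(\{\mathsf E\mathsf E t:t\in{}^\perp P\}\big)^\perp\ast_\bullet L$.
   Context: An abstract Krivine structure $\mathcal K$ consists of sets $\Lambda$ (terms), $\Pi$ (stacks), a relation $\perp\subseteq\Lambda\times\Pi$ (write $t\perp\pi$), a map $\mathrm{push}:\Lambda\times\Pi\to\Pi$ written $t\cdot\pi$ (associating to the right: $t\cdot s\cdot\pi=t\cdot(s\cdot\pi)$), a map $\mathrm{app}:\Lambda\times\Lambda\to\Lambda$ written $ts$ (associating to the left), a subset $\mathrm{QP}\subseteq\Lambda$ closed under application, and $\mathsf K,\mathsf S\in\mathrm{QP}$ such that for all $t,s,u\in\Lambda$, $\pi\in\Pi$: (a) $t\perp s\cdot\pi$ implies $ts\perp\pi$; (b) $t\perp\pi$ implies $\mathsf K\perp t\cdot s\cdot\pi$; (c) $tu(su)\perp\pi$ implies $\mathsf S\perp t\cdot s\cdot u\cdot\pi$. Polars: $L^\perp=\{\pi:\forall t\in L,\ t\perp\pi\}$, ${}^\perp P=\{t:\forall\pi\in P,\ t\perp\pi\}$;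 $\overline P=({}^\perp P)^\perp$; $\widehat P=\bigcup_{\pi\in P}\overline{\{\pi\}}$. For $L\subseteq\Lambda$, $P\subseteq\Pi$: $L\leadsto P=\{t\cdot\pi:t\in L,\pi\in P\}$, $L\leadsto_\bullet P=\widehat{L\leadsto P}$, $P\ast_\bullet L=\{\pi: t\cdot\pi'\in P\ \forall t\in L,\ \pi'\in\overline{\{\pi\}}\}$, $P\,\clubsuit\,L=(\{t\ell:t\in{}^\perp P,\ \ell\in L\})^\perp$. *)

theory Defs
  imports Main
begin

text \<open>Abstract Krivine structure: terms of type 'l (Lambda), stacks of type 'p (Pi),
  orthogonality perp, push, app, quasi-proofs QP, combinators K and S.\<close>

definition AKS :: "('l \<Rightarrow> 'p \<Rightarrow> bool) \<Rightarrow> ('l \<Rightarrow> 'p \<Rightarrow> 'p) \<Rightarrow> ('l \<Rightarrow> 'l \<Rightarrow> 'l)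
    \<Rightarrow> 'l set \<Rightarrow> 'l \<Rightarrow> 'l \<Rightarrow> bool" where
  "AKS perp push app QP K S \<longleftrightarrow>
     (\<forall>t\<in>QP. \<forall>s\<in>QP. app t s \<in> QP) \<and> K \<in> QP \<and> S \<in> QP \<and>
     (\<forall>t s \<pi>. perp t (push s \<pi>) \<longrightarrow> perp (app t s) \<pi>) \<and>
     (\<forall>t s \<pi>. perp t \<pi> \<longrightarrow> perp K (push t (push s \<pi>))) \<and>
     (\<forall>t s u \<pi>. perp (app (app t u) (app s u)) \<pi> \<longrightarrow> perp S (push t (push s (push u \<pi>))))"

definition lpolar :: "('l \<Rightarrow> 'p \<Rightarrow> bool) \<Rightarrow> 'l set \<Rightarrow> 'p set" where
  "lpolar perp L = {\<pi>. \<forall>t\<in>L. perp t \<pi>}"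

definition rpolar :: "('l \<Rightarrow> 'p \<Rightarrow> bool) \<Rightarrow> 'p set \<Rightarrow> 'l set" where
  "rpolar perp P = {t. \<forall>\<pi>\<in>P. perp t \<pi>}"

definition bclos :: "('l \<Rightarrow> 'p \<Rightarrow> bool) \<Rightarrow> 'p set \<Rightarrow> 'p set" where
  "bclos perp P = lpolar perp (rpolar perp P)"

definition hatc :: "('l \<Rightarrow> 'p \<Rightarrow> bool) \<Rightarrow> 'p set \<Rightarrow> 'p set" where
  "hatc perp P = (\<Union>\<pi>\<in>P. bclos perp {\<pi>})"

definition arr :: "('l \<Rightarrow> 'p \<Rightarrow> 'p) \<Rightarrow> 'l set \<Rightarrow> 'p set \<Rightarrow> 'p set" where
  "arr push L P = {push t \<pi> | t \<pi>. t \<in> L \<and> \<pi> \<in> P}"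

definition arrb :: "('l \<Rightarrow> 'p \<Rightarrow> bool) \<Rightarrow> ('l \<Rightarrow> 'p \<Rightarrow> 'p) \<Rightarrow> 'l set \<Rightarrow> 'p set \<Rightarrow> 'p set" where
  "arrb perp push L P = hatc perp (arr push L P)"

definition astb :: "('l \<Rightarrow> 'p \<Rightarrow> bool) \<Rightarrow> ('l \<Rightarrow> 'p \<Rightarrow> 'p) \<Rightarrow> 'p set \<Rightarrow> 'l set \<Rightarrow> 'p set" where
  "astb perp push P L = {\<pi>. \<forall>t\<in>L. \<forall>\<pi>'\<in>bclos perp {\<pi>}. push t \<pi>' \<in> P}"

definition club :: "('l \<Rightarrow> 'p \<Rightarrow> bool) \<Rightarrow> ('l \<Rightarrow> 'l \<Rightarrow> 'l) \<Rightarrow> 'p set \<Rightarrow> 'l set \<Rightarrow> 'p set" where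
  "club perp app P L = lpolar perp {app t l | t l. t \<in> rpolar perp P \<and> l \<in> L}"

end

theory Submission
  imports Defs
begin

text \<open>The combinator E = S(K(SKK)) is an eta-expanded identity: E is orthogonal to
  t\<cdot>s\<cdot>\<pi> as soon as t s is orthogonal to \<pi>, and hence so is EE. Every stack in the
  closure of a singleton {\<pi>} is orthogonal to every term orthogonal to \<pi>, so these
  facts survive the passage to closures built into the bulleted arrow and star.\<close>

lemma mem_bclos_singleton_iff:
  "\<sigma> \<in> bclos perp {\<pi>} \<longleftrightarrow> (\<forall>t. perp t \<pi> \<longrightarrow> perp t \<sigma>)"
  by (auto simp: bclos_def lpolar_def rpolar_def)

lemma mem_bclos_singleton_self: "\<pi> \<in> bclos perp {\<pi>}"
  by (simp add: mem_bclos_singleton_iff)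

lemma lpolar_bclos_singleton_closed:
  "\<pi> \<in> lpolar perp X \<Longrightarrow> \<sigma> \<in> bclos perp {\<pi>} \<Longrightarrow> \<sigma> \<in> lpolar perp X"
  by (auto simp: lpolar_def mem_bclos_singleton_iff)

lemma mem_arrb_iff:
  "\<rho> \<in> arrb perp push L P \<longleftrightarrow> (\<exists>t\<in>L. \<exists>\<pi>\<in>P. \<rho> \<in> bclos perp {push t \<pi>})"
  by (auto simp: arrb_def hatc_def arr_def)

lemma club_perp_app:
  "\<pi> \<in> club perp app P L \<Longrightarrow> t \<in> rpolar perp P \<Longrightarrow> l \<in> L \<Longrightarrow> perp (app t l) \<pi>"
  by (auto simp: club_def lpolar_def)

lemma astb_mono: "P \<subseteq> Q \<Longrightarrow> astb perp push P L \<subseteq> astb perp push Q L"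
  by (auto simp: astb_def)

locale krivine_reduction =
  fixes perp :: "'l \<Rightarrow> 'p \<Rightarrow> bool" and push :: "'l \<Rightarrow> 'p \<Rightarrow> 'p"
    and app :: "'l \<Rightarrow> 'l \<Rightarrow> 'l" and K S :: 'l
  assumes perp_app: "perp t (push s \<pi>) \<Longrightarrow> perp (app t s) \<pi>"
    and perp_K: "perp t \<pi> \<Longrightarrow> perp K (push t (push s \<pi>))"
    and perp_S: "perp (app (app t u) (app s u)) \<pi> \<Longrightarrow> perp S (push t (push s (push u \<pi>)))"
begin

abbreviation E :: 'l where
  "E \<equiv> app S (app K (app (app S K) K))"

lemma perp_SKK:
  assumes "perp t \<pi>"
  shows "perp (app (app S K) K) (push t \<pi>)"
proof -
  from assms have "perp K (push t (push (app K t) \<pi>))"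
    by (rule perp_K)
  then have "perp (app (app K t) (app K t)) \<pi>"
    by (blast intro: perp_app)
  then have "perp S (push K (push K (push t \<pi>)))"
    by (rule perp_S)
  then show ?thesis
    by (blast intro: perp_app)
qed

lemma perp_E:
  assumes "perp (app t s) \<pi>"
  shows "perp E (push t (push s \<pi>))"
proof -
  from assms have "perp (app (app S K) K) (push (app t s) \<pi>)"
    by (rule perp_SKK)
  then have "perp K (push (app (app S K) K) (push s (push (app t s) \<pi>)))"
    by (rule perp_K)
  then have "perp (app (app (app K (app (app S K) K)) s) (app t s)) \<pi>"
    by (blast intro: perp_app)
  then have "perp S (push (app K (app (app S K) K)) (push t (push s \<pi>)))"
    by (rule perp_S)
  then show ?thesis
    by (rule perp_app)
qed

lemma perp_EE_push: "perp (app E t) \<sigma> \<Longrightarrow> perp (app E E) (push t \<sigma>)"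
  by (rule perp_app, rule perp_E)

lemma perp_EE_push_bclos:
  assumes "perp (app t s) \<pi>" and "\<sigma> \<in> bclos perp {push s \<pi>}"
  shows "perp (app E E) (push t \<sigma>)"
proof -
  have "perp (app E t) (push s \<pi>)"
    using assms(1) by (rule perp_app[OF perp_E])
  with assms(2) show ?thesis
    by (simp add: mem_bclos_singleton_iff perp_EE_push)
qed

lemma astb_lpolar_singleton_subset:
  "astb perp push (lpolar perp {u}) T \<subseteq> lpolar perp {app u t | t. t \<in> T}"
proof
  fix \<pi> assume "\<pi> \<in> astb perp push (lpolar perp {u}) T"
  then have "perp u (push t \<pi>)" if "t \<in> T" for t
    using that mem_bclos_singleton_self by (fastforce simp: astb_def lpolar_def)
  then show "\<pi> \<in> lpolar perp {app u t | t. t \<in> T}"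
    by (auto simp: lpolar_def perp_app)
qed

lemma perp_EE_arrb_club:
  assumes "\<rho> \<in> arrb perp push (rpolar perp P) (arrb perp push L (club perp app P L))"
  shows "perp (app E E) \<rho>"
proof -
  obtain t \<sigma> where t: "t \<in> rpolar perp P" and "\<sigma> \<in> arrb perp push L (club perp app P L)"
    and \<rho>: "\<rho> \<in> bclos perp {push t \<sigma>}"
    using assms by (auto simp: mem_arrb_iff)
  then obtain l \<pi> where l: "l \<in> L" and \<pi>: "\<pi> \<in> club perp app P L"
    and \<sigma>: "\<sigma> \<in> bclos perp {push l \<pi>}"
    by (auto simp: mem_arrb_iff)
  from \<pi> t l have "perp (app t l) \<pi>"
    by (rule club_perp_app)
  then have "perp (app E E) (push t \<sigma>)"
    using \<sigma> by (rule perp_EE_push_bclos)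
  with \<rho> show ?thesis
    by (simp add: mem_bclos_singleton_iff)
qed

lemma club_subset_astb_astb:
  "club perp app P L
     \<subseteq> astb perp push (astb perp push (lpolar perp {app E E}) (rpolar perp P)) L"
  unfolding astb_def
proof (intro subsetI CollectI ballI)
  fix \<pi> l \<pi>' t \<pi>''
  assume \<pi>: "\<pi> \<in> club perp app P L" and l: "l \<in> L" and \<pi>': "\<pi>' \<in> bclos perp {\<pi>}"
    and t: "t \<in> rpolar perp P" and \<pi>'': "\<pi>'' \<in> bclos perp {push l \<pi>'}"
  have "\<pi>' \<in> club perp app P L"
    using \<pi> \<pi>' unfolding club_def by (rule lpolar_bclos_singleton_closed)
  then have "perp (app t l) \<pi>'"
    using t l by (rule club_perp_app)
  then have "perp (app E E) (push t \<pi>'')"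
    using \<pi>'' by (rule perp_EE_push_bclos)
  then show "push t \<pi>'' \<in> lpolar perp {app E E}"
    by (simp add: lpolar_def)
qed

end

theorem mainTheorem5:
  fixes perp :: "'l \<Rightarrow> 'p \<Rightarrow> bool" and push :: "'l \<Rightarrow> 'p \<Rightarrow> 'p"
    and app :: "'l \<Rightarrow> 'l \<Rightarrow> 'l" and QP :: "'l set" and K S :: 'l
    and P :: "'p set" and L :: "'l set"
  assumes "AKS perp push app QP K S"
  defines "E \<equiv> app S (app K (app (app S K) K))"
  shows "(\<forall>\<rho>\<in>arrb perp push (rpolar perp P) (arrb perp push L (club perp app P L)).
            perp (app E E) \<rho>)
       \<and> club perp app P L
           \<subseteq> astb perp push (astb perp push (lpolar perp {app E E}) (rpolar perp P)) L
       \<and> astb perp push (astb perp push (lpolar perp {app E E}) (rpolar perp P)) L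
           \<subseteq> astb perp push (lpolar perp {app (app E E) t | t. t \<in> rpolar perp P}) L"
proof -
  interpret krivine_reduction perp push app K S
    using assms(1) by unfold_locales (auto simp: AKS_def)
  show ?thesis
  proof (intro conjI ballI)
    show "perp (app E E) \<rho>"
      if "\<rho> \<in> arrb perp push (rpolar perp P) (arrb perp push L (club perp app P L))" for \<rho>
      using that unfolding E_def by (rule perp_EE_arrb_club)
    show "club perp app P L
        \<subseteq> astb perp push (astb perp push (lpolar perp {app E E}) (rpolar perp P)) L"
      unfolding E_def by (rule club_subset_astb_astb)
    show "astb perp push (astb perp push (lpolar perp {app E E}) (rpolar perp P)) L
        \<subseteq> astb perp push (lpolar perp {app (app E E) t | t. t \<in> rpolar perp P}) L"
      by (intro astb_mono astb_lpolar_singleton_subset)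
  qed
qed

end
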